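(* Let $k>1$ and let $\mathcal{F}_1,\ldots,\mathcal{F}_{k-1}$ be families of finite hypergraphs. Let $\mathcal{F}=\{\mathcal{H}_1\cup\cdots\cup\mathcal{H}_{k-1} : \mathcal{H}_i\in\mathcal{F}_i \text{ for all } i\}$, where the union is taken over hypergraphs $\mathcal{H}_1,\ldots,\mathcal{H}_{k-1}$ on a common vertex set. If $m_k(\mathcal{F}_1),\ldots,m_k(\mathcal{F}_{k-1})<\infty$, then $\chi_{\rm big}(\mathcal{F})\le k$.
   Context: A hypergraph $\mathcal{H}=(V,E)$ consists of a vertex set $V$ and a nonempty family $E$ of nonempty subsets of $V$ (edges). The union of hypergraphs $\mathcal{H}_1,\ldots,\mathcal{H}_{k-1}$ on a common vertex set $V$ is the hypergraph on $V$ whose edge set is the union of their edge sets. A hypergraph is $m$-heavy if all its edges have at least $m$ vertices. A $k$-coloring is a map $V\to\{1,\ldots,k\}$; it is proper if every edge with at least two vertices contains two vertices of different colors, and polychromatic if every edge contains vertices of all $k$ colors. For a family $\mathcal{F}$ of hypergraphs, $m_k(\mathcal{F})$ is the smallest $m$ such that every $m$-heavy hypergraph in $\mathcal{F}$ has a polychromatic $k$-coloring ($\infty$ if none exists), and $\chi_{\rm big}(\mathcal{F})$ is the smallest integer $k$ for which there exists an integer $m$ such that every $m$-heavy hypergraph in $\mathcal{F}$ has a proper $k$-coloring ($\infty$ if no such $k$ exists). *)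

theory Defs
  imports Main "HOL-Library.Extended_Nat"
begin

type_synonym 'a hypergraph = "'a set \<times> 'a set set"

definition hypergraph :: "'a hypergraph \<Rightarrow> bool" where
  "hypergraph H \<longleftrightarrow> snd H \<noteq> {} \<and> (\<forall>e\<in>snd H. e \<noteq> {} \<and> e \<subseteq> fst H)"

definition finite_hypergraph :: "'a hypergraph \<Rightarrow> bool" where
  "finite_hypergraph H \<longleftrightarrow> hypergraph H \<and> finite (fst H)"

definition heavy :: "nat \<Rightarrow> 'a hypergraph \<Rightarrow> bool" where
  "heavy m H \<longleftrightarrow> (\<forall>e\<in>snd H. card e \<ge> m)"

definition is_coloring :: "nat \<Rightarrow> 'a hypergraph \<Rightarrow> ('a \<Rightarrow> nat) \<Rightarrow> bool" where
  "is_coloring k H f \<longleftrightarrow> (\<forall>v\<in>fst H. f v \<in> {1..k})"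

definition proper_coloring :: "nat \<Rightarrow> 'a hypergraph \<Rightarrow> ('a \<Rightarrow> nat) \<Rightarrow> bool" where
  "proper_coloring k H f \<longleftrightarrow> is_coloring k H f \<and>
     (\<forall>e\<in>snd H. (\<exists>x\<in>e. \<exists>y\<in>e. x \<noteq> y) \<longrightarrow> (\<exists>x\<in>e. \<exists>y\<in>e. f x \<noteq> f y))"

definition polychromatic_coloring :: "nat \<Rightarrow> 'a hypergraph \<Rightarrow> ('a \<Rightarrow> nat) \<Rightarrow> bool" where
  "polychromatic_coloring k H f \<longleftrightarrow> is_coloring k H f \<and>
     (\<forall>e\<in>snd H. \<forall>c\<in>{1..k}. \<exists>v\<in>e. f v = c)"

definition m_k :: "nat \<Rightarrow> 'a hypergraph set \<Rightarrow> enat" where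
  "m_k k F = (if \<exists>m. \<forall>H\<in>F. heavy m H \<longrightarrow> (\<exists>f. polychromatic_coloring k H f)
              then enat (LEAST m. \<forall>H\<in>F. heavy m H \<longrightarrow> (\<exists>f. polychromatic_coloring k H f))
              else \<infinity>)"

definition chi_big :: "'a hypergraph set \<Rightarrow> enat" where
  "chi_big F = (if \<exists>k m. \<forall>H\<in>F. heavy m H \<longrightarrow> (\<exists>f. proper_coloring k H f)
              then enat (LEAST k. \<exists>m. \<forall>H\<in>F. heavy m H \<longrightarrow> (\<exists>f. proper_coloring k H f))
              else \<infinity>)"

definition union_family :: "nat \<Rightarrow> (nat \<Rightarrow> 'a hypergraph set) \<Rightarrow> 'a hypergraph set" where
  "union_family k Fs = {H. \<exists>V Hs. (\<forall>i\<in>{1..k-1}. Hs i \<in> Fs i \<and> fst (Hs i) = V) \<and>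
       H = (V, \<Union>i\<in>{1..k-1}. snd (Hs i))}"

end

theory Submission
  imports Defs
begin

text \<open>Take polychromatic colorings f_1, ..., f_(k-1) of the hypergraphs H_i. At each
  vertex v they use at most k - 1 colors, so v can be given a color c v different from
  every f_i v. If e is an edge of H_j and x \<in> e, polychromaticity of f_j yields y \<in> e
  with f_j y = c x, and c y \<noteq> f_j y = c x: no edge of the union is monochromatic.
  Summing the heaviness thresholds of the families F_i makes every H_i heavy enough
  at once.\<close>

lemma heavy_mono: "heavy m H \<Longrightarrow> m' \<le> m \<Longrightarrow> heavy m' H"
  unfolding heavy_def by force

lemma m_k_finite_imp_polychromatic:
  assumes "m_k k F < \<infinity>"
  shows "\<exists>m. \<forall>H\<in>F. heavy m H \<longrightarrow> (\<exists>f. polychromatic_coloring k H f)"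
  using assms unfolding m_k_def by (auto split: if_splits)

lemma chi_big_le:
  assumes "\<forall>H\<in>F. heavy m H \<longrightarrow> (\<exists>f. proper_coloring k H f)"
  shows "chi_big F \<le> enat k"
proof -
  have "(LEAST k. \<exists>m. \<forall>H\<in>F. heavy m H \<longrightarrow> (\<exists>f. proper_coloring k H f)) \<le> k"
    using assms by (intro Least_le) blast
  then show ?thesis
    using assms unfolding chi_big_def by auto
qed

lemma exists_color_avoiding:
  fixes g :: "'i \<Rightarrow> nat"
  assumes "finite I" and "card I < k"
  shows "\<exists>c\<in>{1..k}. \<forall>i\<in>I. g i \<noteq> c"
proof (rule ccontr)
  assume "\<not> ?thesis"
  then have "{1..k} \<subseteq> g ` I" by force
  then have "card {1..k} \<le> card (g ` I)"
    using assms(1) by (intro card_mono) auto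
  also have "\<dots> \<le> card I"
    using assms(1) by (rule card_image_le)
  finally show False
    using assms(2) by simp
qed

lemma proper_coloring_of_polychromatic_cover:
  assumes "finite I" and "card I < k"
    and poly: "\<And>i. i \<in> I \<Longrightarrow> polychromatic_coloring k (Hs i) (f i)"
    and cover: "\<And>e. e \<in> snd H \<Longrightarrow> \<exists>i\<in>I. e \<in> snd (Hs i)"
  shows "\<exists>c. proper_coloring k H c"
proof -
  define c where "c v = (LEAST c. c \<in> {1..k} \<and> (\<forall>i\<in>I. f i v \<noteq> c))" for v
  have c: "c v \<in> {1..k} \<and> (\<forall>i\<in>I. f i v \<noteq> c v)" for v
  proof -
    obtain c0 where "c0 \<in> {1..k} \<and> (\<forall>i\<in>I. f i v \<noteq> c0)"
      using exists_color_avoiding[OF assms(1,2), of "\<lambda>i. f i v"] by blast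
    then show ?thesis
      unfolding c_def by (rule LeastI)
  qed
  have "proper_coloring k H c"
    unfolding proper_coloring_def is_coloring_def
  proof (intro conjI ballI impI)
    fix v
    show "c v \<in> {1..k}"
      using c by blast
  next
    fix e
    assume e: "e \<in> snd H" and "\<exists>x\<in>e. \<exists>y\<in>e. x \<noteq> y"
    then obtain x where x: "x \<in> e" by blast
    obtain j where j: "j \<in> I" and ej: "e \<in> snd (Hs j)"
      using cover[OF e] by blast
    obtain y where y: "y \<in> e" "f j y = c x"
      using poly[OF j] ej c[of x] unfolding polychromatic_coloring_def by blast
    have "c y \<noteq> c x"
      using c[of y] j y(2) by auto
    then show "\<exists>x\<in>e. \<exists>y\<in>e. c x \<noteq> c y"
      using x y(1) by blast
  qed
  then show ?thesis by blast
qed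

lemma union_family_proper_coloring:
  assumes "k > 1"
    and M: "\<forall>i\<in>{1..k-1}. \<forall>H\<in>Fs i. heavy (M i) H \<longrightarrow> (\<exists>f. polychromatic_coloring k H f)"
  shows "\<forall>H\<in>union_family k Fs. heavy (\<Sum>i\<in>{1..k-1}. M i) H \<longrightarrow> (\<exists>c. proper_coloring k H c)"
proof (intro ballI impI)
  fix H
  assume "H \<in> union_family k Fs" and heavy: "heavy (\<Sum>i\<in>{1..k-1}. M i) H"
  then obtain V Hs where Hs: "\<And>i. i \<in> {1..k-1} \<Longrightarrow> Hs i \<in> Fs i"
    and H_eq: "H = (V, \<Union>i\<in>{1..k-1}. snd (Hs i))"
    unfolding union_family_def by blast
  have "\<forall>i\<in>{1..k-1}. \<exists>f. polychromatic_coloring k (Hs i) f"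
  proof
    fix i
    assume i: "i \<in> {1..k-1}"
    have "heavy (\<Sum>i\<in>{1..k-1}. M i) (Hs i)"
      using heavy i unfolding H_eq heavy_def by auto
    moreover have "M i \<le> (\<Sum>i\<in>{1..k-1}. M i)"
      using i by (intro member_le_sum) auto
    ultimately show "\<exists>f. polychromatic_coloring k (Hs i) f"
      using M Hs[OF i] i heavy_mono by blast
  qed
  from bchoice[OF this] obtain f where f: "\<forall>i\<in>{1..k-1}. polychromatic_coloring k (Hs i) (f i)" ..
  have card: "card {1..k-1} < k"
    using assms(1) by simp
  have cover: "\<exists>i\<in>{1..k-1}. e \<in> snd (Hs i)" if "e \<in> snd H" for e
    using that unfolding H_eq by simp
  show "\<exists>c. proper_coloring k H c"
    using f by (intro proper_coloring_of_polychromatic_cover[OF finite_atLeastAtMost card _ cover]) blast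
qed

theorem corollary1:
  fixes k :: nat and Fs :: "nat \<Rightarrow> 'a hypergraph set"
  assumes "k > 1"
    and "\<And>i H. i \<in> {1..k-1} \<Longrightarrow> H \<in> Fs i \<Longrightarrow> finite_hypergraph H"
    and "\<And>i. i \<in> {1..k-1} \<Longrightarrow> m_k k (Fs i) < \<infinity>"
  shows "chi_big (union_family k Fs) \<le> enat k"
proof -
  have "\<forall>i\<in>{1..k-1}. \<exists>m. \<forall>H\<in>Fs i. heavy m H \<longrightarrow> (\<exists>f. polychromatic_coloring k H f)"
    using assms(3) m_k_finite_imp_polychromatic by blast
  from bchoice[OF this] obtain M
    where "\<forall>i\<in>{1..k-1}. \<forall>H\<in>Fs i. heavy (M i) H \<longrightarrow> (\<exists>f. polychromatic_coloring k H f)" ..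
  from union_family_proper_coloring[OF assms(1) this] show ?thesis
    by (rule chi_big_le)
qed

end
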